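(* Let $G$ be a connected graph with vertex set $V(G)=\{u_1,\dots,u_n\}$, $n\ge 2$, let $U_1,\dots,U_k$ be the non-singleton true twin equivalence classes of $G$, and let $\mathcal{H}=\{H_1,\dots,H_n\}$ be a family of graphs. Then $$\dim_l(G\circ\mathcal{H})=\sum_{i=1}^{n}\operatorname{adim}_l(H_i)+\sum_{j:\,I\cap U_j\ne\emptyset}\big(|I\cap U_j|-1\big)+\varrho(G,\mathcal{H}).$$
   Context: All graphs are finite and simple with at least one vertex. $d_G$ is the shortest-path distance ($d_G(x,y)=+\infty$ if $x,y$ lie in different components), and $d_{G,2}(x,y)=\min\{d_G(x,y),2\}$. A vertex $s$ distinguishes $x,y$ (with respect to a distance $d$) if $d(s,x)\ne d(s,y)$. For a connected graph $G$, a set $S\subseteq V(G)$ is a local metric generator if every two adjacent vertices of $G$ are distinguished w.r.t. $d_G$ by some vertex of $S$; $\dim_l(G)$ is the minimum size of such a set. A set $S\subseteq V(H)$ is a local adjacency generator of a graph $H$ if every two adjacent vertices of $H$ are distinguished w.r.t. $d_{H,2}$ by some vertex of $S$ (equivalently, for any adjacent $x,y\notin S$ some $s\in S$ is adjacent to exactly one of them); $\operatorname{adim}_l(H)$ is the minimum size of such a set, and a minimum one is a local adjacency basis. $\Phi$ denotes the class of empty (edgeless) graphs. $\mathcal{G}$ denotes the class of graphs $H$ such that for every local adjacency basis $B$ of $H$ there is $v\in V(H)$ with $B\subseteq N_H(v)$ (open neighbourhood). Vertices $x,y$ are true twins if $N[x]=N[y]$; this is an equivalence relation. The lexicographic product $G\circ\mathcal{H}$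 has vertex set $\bigcup_i \{u_i\}\times V(H_i)$, with $(u_i,v)\sim(u_j,w)$ iff $u_iu_j\in E(G)$, or $i=j$ and $vw\in E(H_i)$. Notation: $T(G)=\bigcup_{j}U_j$; $V_E=\{u_i\in V(G)-T(G): H_i\in\Phi\}$; $I=\{u_i\in V(G): H_i\in\mathcal{G}\}$; for each $j$ with $I\cap U_j\neq\emptyset$ choose (arbitrarily) one vertex of $I\cap U_j$ and let $I'_j$ be the set of the remaining vertices of $I\cap U_j$ ($I'_j=\emptyset$ otherwise); $X_E=I-\bigcup_j I'_j$. Two vertices $u_i,u_j\in X_E$ satisfy relation $\mathcal{R}$ iff $u_i\sim u_j$ and $d_G(u,u_i)=d_G(u,u_j)$ for all $u\in V(G)-(V_E\cup\{u_i,u_j\})$. $\varrho(G,\mathcal{H})$ is the minimum of $|A|$ over sets $A\subseteq X_E$ such that every pair $u_i,u_j\in X_E$ satisfying $\mathcal{R}$ is distinguished (w.r.t. $d_G$) by some vertex of $A$. *)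

theory Defs
  imports "HOL-Library.Extended_Nat"
begin

definition graph :: "'a set \<Rightarrow> ('a \<Rightarrow> 'a \<Rightarrow> bool) \<Rightarrow> bool" where
  "graph V E \<longleftrightarrow> finite V \<and> V \<noteq> {} \<and> (\<forall>x y. E x y \<longrightarrow> x \<in> V \<and> y \<in> V)
     \<and> (\<forall>x y. E x y \<longrightarrow> E y x) \<and> (\<forall>x. \<not> E x x)"

definition dist :: "('a \<Rightarrow> 'a \<Rightarrow> bool) \<Rightarrow> 'a \<Rightarrow> 'a \<Rightarrow> enat" where
  "dist E x y = (INF k \<in> {k. (E ^^ k) x y}. enat k)"

definition dist2 :: "('a \<Rightarrow> 'a \<Rightarrow> bool) \<Rightarrow> 'a \<Rightarrow> 'a \<Rightarrow> enat" where
  "dist2 E x y = min (dist E x y) 2"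

definition connected_graph :: "'a set \<Rightarrow> ('a \<Rightarrow> 'a \<Rightarrow> bool) \<Rightarrow> bool" where
  "connected_graph V E \<longleftrightarrow> graph V E \<and> (\<forall>x\<in>V. \<forall>y\<in>V. dist E x y \<noteq> \<infinity>)"

definition local_metric_generator :: "'a set \<Rightarrow> ('a \<Rightarrow> 'a \<Rightarrow> bool) \<Rightarrow> 'a set \<Rightarrow> bool" where
  "local_metric_generator V E S \<longleftrightarrow> S \<subseteq> V \<and>
     (\<forall>x y. E x y \<longrightarrow> (\<exists>s\<in>S. dist E s x \<noteq> dist E s y))"

definition local_metric_dim :: "'a set \<Rightarrow> ('a \<Rightarrow> 'a \<Rightarrow> bool) \<Rightarrow> nat" where
  "local_metric_dim V E = Min {card S | S. local_metric_generator V E S}"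

definition local_adj_generator :: "'a set \<Rightarrow> ('a \<Rightarrow> 'a \<Rightarrow> bool) \<Rightarrow> 'a set \<Rightarrow> bool" where
  "local_adj_generator V E S \<longleftrightarrow> S \<subseteq> V \<and>
     (\<forall>x y. E x y \<longrightarrow> (\<exists>s\<in>S. dist2 E s x \<noteq> dist2 E s y))"

definition local_adj_dim :: "'a set \<Rightarrow> ('a \<Rightarrow> 'a \<Rightarrow> bool) \<Rightarrow> nat" where
  "local_adj_dim V E = Min {card S | S. local_adj_generator V E S}"

definition local_adj_basis :: "'a set \<Rightarrow> ('a \<Rightarrow> 'a \<Rightarrow> bool) \<Rightarrow> 'a set \<Rightarrow> bool" where
  "local_adj_basis V E B \<longleftrightarrow> local_adj_generator V E B \<and> card B = local_adj_dim V E"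

definition open_nbhd :: "('a \<Rightarrow> 'a \<Rightarrow> bool) \<Rightarrow> 'a \<Rightarrow> 'a set" where
  "open_nbhd E v = {w. E v w}"

definition closed_nbhd :: "('a \<Rightarrow> 'a \<Rightarrow> bool) \<Rightarrow> 'a \<Rightarrow> 'a set" where
  "closed_nbhd E v = insert v (open_nbhd E v)"

definition empty_graph :: "'a set \<Rightarrow> ('a \<Rightarrow> 'a \<Rightarrow> bool) \<Rightarrow> bool" where
  "empty_graph V E \<longleftrightarrow> (\<forall>x y. \<not> E x y)"

definition class_G :: "'a set \<Rightarrow> ('a \<Rightarrow> 'a \<Rightarrow> bool) \<Rightarrow> bool" where
  "class_G V E \<longleftrightarrow> (\<forall>B. local_adj_basis V E B \<longrightarrow> (\<exists>v\<in>V. B \<subseteq> open_nbhd E v))"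

definition twin_class :: "'a set \<Rightarrow> ('a \<Rightarrow> 'a \<Rightarrow> bool) \<Rightarrow> 'a \<Rightarrow> 'a set" where
  "twin_class V E x = {y\<in>V. closed_nbhd E y = closed_nbhd E x}"

definition twin_classes_nonsingleton :: "'a set \<Rightarrow> ('a \<Rightarrow> 'a \<Rightarrow> bool) \<Rightarrow> 'a set set" where
  "twin_classes_nonsingleton V E = {twin_class V E x | x. x \<in> V \<and> card (twin_class V E x) \<ge> 2}"

definition T_set :: "'a set \<Rightarrow> ('a \<Rightarrow> 'a \<Rightarrow> bool) \<Rightarrow> 'a set" where
  "T_set V E = \<Union> (twin_classes_nonsingleton V E)"

definition lex_V :: "'a set \<Rightarrow> ('a \<Rightarrow> 'b set) \<Rightarrow> ('a \<times> 'b) set" where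
  "lex_V V HV = {(u, v). u \<in> V \<and> v \<in> HV u}"

definition lex_E :: "'a set \<Rightarrow> ('a \<Rightarrow> 'a \<Rightarrow> bool) \<Rightarrow> ('a \<Rightarrow> 'b set) \<Rightarrow> ('a \<Rightarrow> 'b \<Rightarrow> 'b \<Rightarrow> bool)
    \<Rightarrow> ('a \<times> 'b) \<Rightarrow> ('a \<times> 'b) \<Rightarrow> bool" where
  "lex_E V E HV HE p q \<longleftrightarrow> p \<in> lex_V V HV \<and> q \<in> lex_V V HV \<and>
     (E (fst p) (fst q) \<or> (fst p = fst q \<and> HE (fst p) (snd p) (snd q)))"

definition V_E_set :: "'a set \<Rightarrow> ('a \<Rightarrow> 'a \<Rightarrow> bool) \<Rightarrow> ('a \<Rightarrow> 'b set) \<Rightarrow> ('a \<Rightarrow> 'b \<Rightarrow> 'b \<Rightarrow> bool) \<Rightarrow> 'a set" where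
  "V_E_set V E HV HE = {u \<in> V - T_set V E. empty_graph (HV u) (HE u)}"

definition I_set :: "'a set \<Rightarrow> ('a \<Rightarrow> 'b set) \<Rightarrow> ('a \<Rightarrow> 'b \<Rightarrow> 'b \<Rightarrow> bool) \<Rightarrow> 'a set" where
  "I_set V HV HE = {u \<in> V. class_G (HV u) (HE u)}"

text \<open>rep U is the chosen vertex of I \<inter> U (for non-singleton classes U meeting I);
I'_j = (I \<inter> U_j) - {rep U_j}; X_E = I minus all I'_j.\<close>
definition X_E_set :: "'a set \<Rightarrow> ('a \<Rightarrow> 'a \<Rightarrow> bool) \<Rightarrow> ('a \<Rightarrow> 'b set) \<Rightarrow> ('a \<Rightarrow> 'b \<Rightarrow> 'b \<Rightarrow> bool)
    \<Rightarrow> ('a set \<Rightarrow> 'a) \<Rightarrow> 'a set" where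
  "X_E_set V E HV HE rep = I_set V HV HE -
     (\<Union>U\<in>twin_classes_nonsingleton V E. (I_set V HV HE \<inter> U) - {rep U})"

definition rel_R :: "'a set \<Rightarrow> ('a \<Rightarrow> 'a \<Rightarrow> bool) \<Rightarrow> ('a \<Rightarrow> 'b set) \<Rightarrow> ('a \<Rightarrow> 'b \<Rightarrow> 'b \<Rightarrow> bool)
    \<Rightarrow> ('a set \<Rightarrow> 'a) \<Rightarrow> 'a \<Rightarrow> 'a \<Rightarrow> bool" where
  "rel_R V E HV HE rep x y \<longleftrightarrow> x \<in> X_E_set V E HV HE rep \<and> y \<in> X_E_set V E HV HE rep \<and> E x y \<and>
     (\<forall>u \<in> V - (V_E_set V E HV HE \<union> {x, y}). dist E u x = dist E u y)"

definition varrho :: "'a set \<Rightarrow> ('a \<Rightarrow> 'a \<Rightarrow> bool) \<Rightarrow> ('a \<Rightarrow> 'b set) \<Rightarrow> ('a \<Rightarrow> 'b \<Rightarrow> 'b \<Rightarrow> bool)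
    \<Rightarrow> ('a set \<Rightarrow> 'a) \<Rightarrow> nat" where
  "varrho V E HV HE rep = Min {card A | A. A \<subseteq> X_E_set V E HV HE rep \<and>
     (\<forall>x y. rel_R V E HV HE rep x y \<longrightarrow> (\<exists>a\<in>A. dist E a x \<noteq> dist E a y))}"

end

theory Submission
  imports Defs
begin

text \<open>
  In the lexicographic product G \<circ> \<H>, the distance between vertices of different fibres is
  their distance in G, while inside the fibre of u it is the distance of H_u truncated at 2, as
  every vertex of G has a neighbour. Hence S is a local metric generator of the product iff every
  fibre S_u is a local adjacency generator of H_u and every edge uv of G is resolved, either by a
  vertex w \<notin> {u, v} with nonempty fibre separating u and v in G, or because S_u (or S_v) lies in
  no open neighbourhood of H_u. Such a fibre costs adim(H_u) + 1 vertices if H_u \<in> \<G> and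
  adim(H_u) otherwise, so dim_l(G \<circ> \<H>) is \<Sum> adim(H_u) plus the least size of a set
  J \<subseteq> I of vertices paying the extra vertex for which the edges of G inside I stay resolved.
  Two true twins are resolved by no third vertex, so J contains all but one vertex of each
  I \<inter> U_j; and a pair in relation \<R> can only be resolved by a vertex of X_E in J, which
  accounts for \<rho>(G, \<H>).
\<close>

lemma Min_card_le:
  assumes "finite X" "\<And>S. P S \<Longrightarrow> S \<subseteq> X" "P S"
  shows "Min {card S | S. P S} \<le> card S"
proof -
  have "{card S | S. P S} \<subseteq> {..card X}" using assms(1,2) by (auto intro: card_mono)
  then show ?thesis using assms(3) by (intro Min_le) (auto intro: finite_subset)
qed

lemma Min_card_attained:
  assumes "finite X" "\<And>S. P S \<Longrightarrow> S \<subseteq> X" "P S"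
  obtains T where "P T" "card T = Min {card S | S. P S}"
proof -
  have "{card S | S. P S} \<subseteq> {..card X}" using assms(1,2) by (auto intro: card_mono)
  then have "Min {card S | S. P S} \<in> {card S | S. P S}"
    using assms(3) by (intro Min_in) (auto intro: finite_subset)
  then show ?thesis using that by auto
qed

lemma sum_add_of_bool_card:
  fixes f :: "'a \<Rightarrow> nat"
  assumes "finite A" "B \<subseteq> A"
  shows "(\<Sum>x\<in>A. f x + of_bool (x \<in> B)) = (\<Sum>x\<in>A. f x) + card B"
  using assms by (simp add: sum.distrib Int_absorb1 Int_absorb2)

section \<open>Distances\<close>

lemma dist_le_enat: "(E ^^ k) x y \<Longrightarrow> dist E x y \<le> enat k"
  unfolding dist_def by (rule INF_lower2[of k]) auto

lemma dist_eq_infinity_iff: "dist E x y = \<infinity> \<longleftrightarrow> (\<forall>k. \<not> (E ^^ k) x y)"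
proof
  assume "dist E x y = \<infinity>"
  then show "\<forall>k. \<not> (E ^^ k) x y"
    using dist_le_enat[of _ E x y] by (metis enat_ord_simps(4) infinity_ileE)
qed (simp add: dist_def top_enat_def)

lemma relpowp_dist: "dist E x y = enat k \<Longrightarrow> (E ^^ k) x y"
proof -
  assume k: "dist E x y = enat k"
  then have "{k. (E ^^ k) x y} \<noteq> {}"
    using dist_eq_infinity_iff[of E x y] by auto
  then have "Inf (enat ` {k. (E ^^ k) x y}) \<in> enat ` {k. (E ^^ k) x y}"
    unfolding Inf_enat_def by (auto intro: LeastI)
  then show ?thesis using k unfolding dist_def by auto
qed

lemma dist_self [simp]: "dist E x x = 0"
  using dist_le_enat[of 0 E x x] by (metis zero_enat_def ile0_eq relpowp_0_I)

lemma dist_eq_0_iff: "dist E x y = 0 \<longleftrightarrow> x = y"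
  using relpowp_dist[of E x y 0] by (auto simp: zero_enat_def)

lemma dist_eq_1_iff:
  assumes "irreflp E"
  shows "dist E x y = 1 \<longleftrightarrow> E x y"
proof
  assume "dist E x y = 1"
  then show "E x y" using relpowp_dist[of E x y 1] by (simp add: one_enat_def del: relpowp.simps)
next
  assume "E x y"
  then have "dist E x y \<le> 1" and "x \<noteq> y"
    using dist_le_enat[of 1 E x y] assms by (auto simp: one_enat_def irreflp_def)
  then show "dist E x y = 1"
    using dist_eq_0_iff[of E x y] by (cases "dist E x y") (auto simp: one_enat_def zero_enat_def)
qed

lemma dist_eq_2:
  assumes "irreflp E" "(E ^^ 2) x y" "x \<noteq> y" "\<not> E x y"
  shows "dist E x y = 2"
  using dist_le_enat[OF assms(2)] dist_eq_0_iff[of E x y] dist_eq_1_iff[OF assms(1), of x y]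
      assms(3,4)
  by (cases "dist E x y") (auto simp: one_enat_def zero_enat_def numeral_eq_enat)

lemma dist2_eq:
  assumes "irreflp E"
  shows "dist2 E x y = (if x = y then 0 else if E x y then 1 else 2)"
proof -
  have "2 \<le> dist E x y" if "x \<noteq> y" "\<not> E x y"
    using that dist_eq_0_iff[of E x y] dist_eq_1_iff[OF assms, of x y]
    by (cases "dist E x y") (auto simp: one_enat_def zero_enat_def numeral_eq_enat)
  then show ?thesis
    unfolding dist2_def using dist_eq_0_iff[of E x y] dist_eq_1_iff[OF assms, of x y]
    by (auto simp: min_def)
qed

lemma dist2_eq_1_iff: "irreflp E \<Longrightarrow> dist2 E x y = 1 \<longleftrightarrow> E x y"
  by (simp add: dist2_eq irreflp_def)

lemma relpowp_symmetric:
  assumes "symp E"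
  shows "(E ^^ k) x y \<Longrightarrow> (E ^^ k) y x"
proof (induction k arbitrary: y)
  case (Suc k)
  then obtain z where "(E ^^ k) x z" "E z y" by (auto elim: relpowp_Suc_E)
  then show ?case using Suc.IH assms by (blast intro: relpowp_Suc_I2 dest: sympD)
qed simp

lemma dist_commute: "symp E \<Longrightarrow> dist E x y = dist E y x"
  unfolding dist_def using relpowp_symmetric by metis

section \<open>Graphs and true twins\<close>

lemma graphD:
  assumes "graph V E"
  shows "finite V" "V \<noteq> {}" "E x y \<Longrightarrow> x \<in> V \<and> y \<in> V" "symp E" "irreflp E"
  using assms unfolding graph_def by (auto intro: sympI irreflpI)

lemma mem_closed_nbhd_iff: "y \<in> closed_nbhd E x \<longleftrightarrow> y = x \<or> E x y"
  unfolding closed_nbhd_def open_nbhd_def by auto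

lemma mem_closed_nbhd_commute: "symp E \<Longrightarrow> y \<in> closed_nbhd E x \<longleftrightarrow> x \<in> closed_nbhd E y"
  by (auto simp: mem_closed_nbhd_iff dest: sympD)

lemma true_twins_adjacent: "closed_nbhd E y = closed_nbhd E z \<Longrightarrow> y \<noteq> z \<Longrightarrow> E y z"
  by (metis insertI1 closed_nbhd_def mem_closed_nbhd_iff)

lemma dist_le_if_neighbours_covered:
  assumes nbrs: "\<And>z. E z x \<Longrightarrow> z = x' \<or> E z x'" and "w \<noteq> x"
  shows "dist E w x' \<le> dist E w x"
proof (cases "dist E w x")
  case (enat k)
  then have "(E ^^ k) w x" by (rule relpowp_dist)
  moreover obtain m where "k = Suc m" using calculation \<open>w \<noteq> x\<close> by (cases k) auto
  ultimately obtain z where z: "(E ^^ m) w z" "E z x" by (auto elim: relpowp_Suc_E)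
  show ?thesis
  proof (cases "z = x'")
    case True
    then have "dist E w x' \<le> enat m" using z(1) by (simp add: dist_le_enat)
    then show ?thesis using enat \<open>k = Suc m\<close> by (simp add: order_trans)
  next
    case False
    then have "(E ^^ Suc m) w x'" using z nbrs by (blast intro: relpowp_Suc_I)
    then show ?thesis using enat \<open>k = Suc m\<close> by (simp add: dist_le_enat)
  qed
qed simp

lemma dist_true_twins:
  assumes "symp E" "closed_nbhd E x = closed_nbhd E x'" "w \<noteq> x" "w \<noteq> x'"
  shows "dist E w x = dist E w x'"
proof -
  have "z = x' \<or> E z x'" if "E z x" for z
    using that assms(1,2) mem_closed_nbhd_iff[of z] by (metis sympD)
  moreover have "z = x \<or> E z x" if "E z x'" for z
    using that assms(1,2) mem_closed_nbhd_iff[of z] by (metis sympD)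
  ultimately show ?thesis
    using dist_le_if_neighbours_covered[of E x x' w] dist_le_if_neighbours_covered[of E x' x w]
      assms(3,4) by (simp add: order_antisym)
qed

lemma true_twin_resolves:
  assumes "symp E" "irreflp E" and twins: "closed_nbhd E w' = closed_nbhd E w"
    and "E u v" "w \<notin> {u, v}" and dist: "dist E w u \<noteq> dist E w v"
  shows "w' \<notin> {u, v} \<and> dist E w' u \<noteq> dist E w' v"
proof
  show w': "w' \<notin> {u, v}"
  proof
    assume "w' \<in> {u, v}"
    then have "u \<in> closed_nbhd E w'" "v \<in> closed_nbhd E w'"
      using \<open>E u v\<close> \<open>symp E\<close> by (auto simp: mem_closed_nbhd_iff dest: sympD)
    then have "u \<in> closed_nbhd E w" "v \<in> closed_nbhd E w" using twins by simp_all
    then have "E w u" "E w v" using \<open>w \<notin> {u, v}\<close> by (auto simp: mem_closed_nbhd_iff)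
    then show False using dist dist_eq_1_iff[OF \<open>irreflp E\<close>] by metis
  qed
  have "dist E w' z = dist E w z" if "z \<in> {u, v}" for z
    using dist_true_twins[OF \<open>symp E\<close> twins, of z] that w' \<open>w \<notin> {u, v}\<close>
      dist_commute[OF \<open>symp E\<close>] by (metis insert_iff)
  then show "dist E w' u \<noteq> dist E w' v" using dist by simp
qed

lemma resolves_of_true_twins:
  assumes "symp E" "irreflp E"
    and twins: "closed_nbhd E x' = closed_nbhd E x" "closed_nbhd E y' = closed_nbhd E y"
    and "E x y" "w \<notin> {x', y'}" and dist: "dist E w x' \<noteq> dist E w y'"
  shows "w \<notin> {x, y} \<and> dist E w x \<noteq> dist E w y"
proof
  show w: "w \<notin> {x, y}"
  proof
    assume "w \<in> {x, y}"
    have "x \<in> closed_nbhd E y'" "y \<in> closed_nbhd E x'"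
      using twins \<open>E x y\<close> \<open>symp E\<close> by (auto simp: mem_closed_nbhd_iff dest: sympD)
    moreover have "x' \<in> closed_nbhd E x" "y' \<in> closed_nbhd E y"
      using twins by (auto simp: closed_nbhd_def)
    ultimately have "x' \<in> closed_nbhd E w" "y' \<in> closed_nbhd E w"
      using \<open>w \<in> {x, y}\<close> mem_closed_nbhd_commute[OF \<open>symp E\<close>] by auto
    then have "E w x'" "E w y'" using \<open>w \<notin> {x', y'}\<close> by (auto simp: mem_closed_nbhd_iff)
    then show False using dist dist_eq_1_iff[OF \<open>irreflp E\<close>] by metis
  qed
  have "dist E w x = dist E w x'" "dist E w y = dist E w y'"
    using dist_true_twins[OF \<open>symp E\<close>] twins w \<open>w \<notin> {x', y'}\<close> by (metis insert_iff)+
  then show "dist E w x \<noteq> dist E w y" using dist by simp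
qed

lemma twin_class_subset: "U \<in> twin_classes_nonsingleton V E \<Longrightarrow> U \<subseteq> V"
  unfolding twin_classes_nonsingleton_def twin_class_def by auto

lemma twin_class_card: "U \<in> twin_classes_nonsingleton V E \<Longrightarrow> 2 \<le> card U"
  unfolding twin_classes_nonsingleton_def by auto

lemma twin_class_closed_nbhd_eq:
  "U \<in> twin_classes_nonsingleton V E \<Longrightarrow> y \<in> U \<Longrightarrow> z \<in> U \<Longrightarrow> closed_nbhd E y = closed_nbhd E z"
  unfolding twin_classes_nonsingleton_def twin_class_def by auto

lemma finite_twin_class: "U \<in> twin_classes_nonsingleton V E \<Longrightarrow> finite U"
  using twin_class_card card.infinite by force

lemma twin_classes_disjoint:
  "U \<in> twin_classes_nonsingleton V E \<Longrightarrow> U' \<in> twin_classes_nonsingleton V E \<Longrightarrow> z \<in> U \<Longrightarrow> z \<in> U'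
    \<Longrightarrow> U = U'"
  unfolding twin_classes_nonsingleton_def twin_class_def by auto

lemma finite_twin_classes: "finite V \<Longrightarrow> finite (twin_classes_nonsingleton V E)"
  by (rule finite_subset[of _ "Pow V"]) (auto dest: twin_class_subset)

lemma mem_T_set_iff: "x \<in> T_set V E \<longleftrightarrow> (\<exists>U\<in>twin_classes_nonsingleton V E. x \<in> U)"
  unfolding T_set_def by simp

lemma true_twins_in_twin_class:
  assumes "finite V" "y \<in> V" "z \<in> V" "closed_nbhd E y = closed_nbhd E z" "y \<noteq> z"
  obtains U where "U \<in> twin_classes_nonsingleton V E" "y \<in> U" "z \<in> U"
proof -
  have yz: "{y, z} \<subseteq> twin_class V E y" using assms(2-4) unfolding twin_class_def by auto
  have "finite (twin_class V E y)" using assms(1) unfolding twin_class_def by simp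
  then have "2 \<le> card (twin_class V E y)" using card_mono[OF _ yz] assms(5) by simp
  then have "twin_class V E y \<in> twin_classes_nonsingleton V E"
    using assms(2) unfolding twin_classes_nonsingleton_def by blast
  then show ?thesis using that yz by blast
qed

lemma twin_class_other_member:
  assumes "U \<in> twin_classes_nonsingleton V E" "w \<in> U"
  obtains w' where "w' \<in> U" "w' \<noteq> w"
proof -
  have "\<not> U \<subseteq> {w}" using twin_class_card[OF assms(1)] card_mono[of "{w}" U] by auto
  then show ?thesis using that by blast
qed

section \<open>Local adjacency generators\<close>

definition in_some_nbhd :: "'b set \<Rightarrow> ('b \<Rightarrow> 'b \<Rightarrow> bool) \<Rightarrow> 'b set \<Rightarrow> bool" where
  "in_some_nbhd W F C \<longleftrightarrow> (\<exists>a\<in>W. C \<subseteq> open_nbhd F a)"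

lemma local_adj_generator_carrier:
  assumes "graph W F"
  shows "local_adj_generator W F W"
  unfolding local_adj_generator_def
proof (intro conjI allI impI)
  fix x y assume "F x y"
  then show "\<exists>s\<in>W. dist2 F s x \<noteq> dist2 F s y"
    using graphD[OF assms] dist2_eq[of F] by (intro bexI[of _ x]) (auto simp: irreflp_def)
qed simp

lemma local_adj_dim_le:
  assumes "graph W F" "local_adj_generator W F C"
  shows "local_adj_dim W F \<le> card C"
  unfolding local_adj_dim_def
  by (rule Min_card_le[where P = "local_adj_generator W F", OF graphD(1)[OF assms(1)] _ assms(2)])
    (simp add: local_adj_generator_def)

lemma local_adj_basis_exists:
  assumes "graph W F"
  obtains B where "local_adj_basis W F B"
  unfolding local_adj_basis_def local_adj_dim_def
  by (rule Min_card_attained[where P = "local_adj_generator W F",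
        OF graphD(1)[OF assms] _ local_adj_generator_carrier[OF assms]])
    (auto simp: local_adj_generator_def)

lemma local_adj_generator_nonempty: "F x y \<Longrightarrow> local_adj_generator W F C \<Longrightarrow> C \<noteq> {}"
  unfolding local_adj_generator_def by blast

lemma not_in_some_nbhd_nonempty: "W \<noteq> {} \<Longrightarrow> \<not> in_some_nbhd W F C \<Longrightarrow> C \<noteq> {}"
  unfolding in_some_nbhd_def by auto

lemma class_G_card_not_in_some_nbhd:
  assumes "graph W F" "class_G W F" "local_adj_generator W F C" "\<not> in_some_nbhd W F C"
  shows "local_adj_dim W F + 1 \<le> card C"
proof -
  have "\<not> local_adj_basis W F C"
    using assms(2,4) unfolding class_G_def in_some_nbhd_def by blast
  then show ?thesis using local_adj_dim_le[OF assms(1,3)] assms(3)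
    unfolding local_adj_basis_def by simp
qed

lemma class_G_generator_not_in_some_nbhd:
  assumes g: "graph W F" and "class_G W F"
  obtains C where "local_adj_generator W F C" "\<not> in_some_nbhd W F C"
      "card C = local_adj_dim W F + 1"
proof -
  obtain B where B: "local_adj_basis W F B" using local_adj_basis_exists[OF g] .
  then obtain v where v: "v \<in> W" "B \<subseteq> open_nbhd F v"
    using \<open>class_G W F\<close> unfolding class_G_def by blast
  have gen: "local_adj_generator W F B" and "B \<subseteq> W"
    using B unfolding local_adj_basis_def local_adj_generator_def by auto
  have "v \<notin> B" using v graphD(5)[OF g] unfolding open_nbhd_def irreflp_def by auto
  moreover have "finite B" using \<open>B \<subseteq> W\<close> graphD(1)[OF g] finite_subset by blast
  ultimately have "card (insert v B) = local_adj_dim W F + 1"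
    using B unfolding local_adj_basis_def by simp
  moreover have "local_adj_generator W F (insert v B)"
    using gen v(1) unfolding local_adj_generator_def by auto
  \<comment> \<open>A vertex adjacent to v and to all of B would not be distinguished from v by B.\<close>
  moreover have "\<not> in_some_nbhd W F (insert v B)"
    unfolding in_some_nbhd_def
  proof
    assume "\<exists>y\<in>W. insert v B \<subseteq> open_nbhd F y"
    then obtain y where "F y v" and By: "B \<subseteq> open_nbhd F y" unfolding open_nbhd_def by auto
    then obtain s where s: "s \<in> B" "dist2 F s y \<noteq> dist2 F s v"
      using gen unfolding local_adj_generator_def by blast
    have "F s y" "F s v" using s(1) By v(2) graphD(4)[OF g] unfolding open_nbhd_def
      by (auto dest: sympD)
    moreover have "s \<noteq> y" "s \<noteq> v" using calculation graphD(5)[OF g] by (auto simp: irreflp_def)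
    ultimately show False using s(2) dist2_eq[OF graphD(5)[OF g]] by simp
  qed
  ultimately show ?thesis using that by blast
qed

lemma empty_graph_local_adj_dim:
  assumes "empty_graph W F" "graph W F"
  shows "local_adj_dim W F = 0"
  using local_adj_dim_le[OF assms(2), of "{}"] assms(1)
  unfolding local_adj_generator_def empty_graph_def by simp

lemma empty_graph_class_G:
  assumes "empty_graph W F" "graph W F"
  shows "class_G W F"
  unfolding class_G_def
proof (intro allI impI)
  fix B assume "local_adj_basis W F B"
  then have "card B = 0" "B \<subseteq> W"
    using empty_graph_local_adj_dim[OF assms] unfolding local_adj_basis_def local_adj_generator_def
    by auto
  then have "B = {}" using graphD(1)[OF assms(2)] by (meson card_0_eq finite_subset)
  then show "\<exists>v\<in>W. B \<subseteq> open_nbhd F v" using graphD(2)[OF assms(2)] by auto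
qed

lemma empty_graph_not_in_some_nbhd: "empty_graph W F \<Longrightarrow> C \<noteq> {} \<Longrightarrow> \<not> in_some_nbhd W F C"
  unfolding empty_graph_def in_some_nbhd_def open_nbhd_def by auto

section \<open>The lexicographic product\<close>

definition fibre :: "('a \<times> 'b) set \<Rightarrow> 'a \<Rightarrow> 'b set" where
  "fibre S u = {a. (u, a) \<in> S}"

locale lex_product =
  fixes V :: "'a set" and E :: "'a \<Rightarrow> 'a \<Rightarrow> bool"
    and HV :: "'a \<Rightarrow> 'b set" and HE :: "'a \<Rightarrow> 'b \<Rightarrow> 'b \<Rightarrow> bool"
  assumes connected: "connected_graph V E"
    and two_vertices: "2 \<le> card V"
    and fibre_graph: "\<And>u. u \<in> V \<Longrightarrow> graph (HV u) (HE u)"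
begin

abbreviation "LV \<equiv> lex_V V HV"
abbreviation "LE \<equiv> lex_E V E HV HE"

lemma graph: "graph V E"
  using connected unfolding connected_graph_def by simp

lemmas finite_V = graphD(1)[OF graph]
  and edge_in_V = graphD(3)[OF graph]
  and symp_E = graphD(4)[OF graph]
  and irreflp_E = graphD(5)[OF graph]

lemma dist_finite: "x \<in> V \<Longrightarrow> y \<in> V \<Longrightarrow> dist E x y \<noteq> \<infinity>"
  using connected unfolding connected_graph_def by simp

lemma lex_V_iff: "(u, a) \<in> LV \<longleftrightarrow> u \<in> V \<and> a \<in> HV u"
  unfolding lex_V_def by simp

lemma finite_lex_V: "finite LV"
proof -
  have "LV \<subseteq> V \<times> (\<Union>u\<in>V. HV u)" unfolding lex_V_def by auto
  then show ?thesis using finite_V graphD(1)[OF fibre_graph]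
    by (meson finite_SigmaI finite_UN_I finite_subset)
qed

lemma fibre_edge_irrefl: "u \<in> V \<Longrightarrow> \<not> HE u a a"
  using graphD(5)[OF fibre_graph] by (simp add: irreflp_def)

lemma fibre_edge_sym: "u \<in> V \<Longrightarrow> HE u a b \<Longrightarrow> HE u b a"
  using graphD(4)[OF fibre_graph] by (blast dest: sympD)

lemma irreflp_lex_E: "irreflp LE"
  using irreflp_E fibre_edge_irrefl unfolding lex_E_def lex_V_def irreflp_def by auto

lemma exists_neighbour:
  assumes "u \<in> V"
  obtains w where "E u w"
proof -
  have "\<not> V \<subseteq> {u}"
  proof
    assume "V \<subseteq> {u}"
    then have "card V \<le> 1" using card_mono[of "{u}" V] by simp
    then show False using two_vertices by simp
  qed
  then obtain w where w: "w \<in> V" "w \<noteq> u" by blast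
  then obtain k where k: "(E ^^ k) u w"
    using dist_finite[OF assms w(1)] dist_eq_infinity_iff[of E u w] by auto
  then obtain m where "k = Suc m" using w(2) by (cases k) auto
  then show ?thesis using that k relpowp_Suc_D2[of m E u w] by auto
qed

lemma lex_relpowp_lift:
  "(E ^^ Suc k) u v \<Longrightarrow> u \<in> V \<Longrightarrow> a \<in> HV u \<Longrightarrow> b \<in> HV v \<Longrightarrow> (LE ^^ Suc k) (u, a) (v, b)"
proof (induction k arbitrary: u a)
  case 0
  then show ?case using edge_in_V unfolding lex_E_def lex_V_def by auto
next
  case (Suc k)
  obtain z where z: "E u z" "(E ^^ Suc k) z v" using Suc.prems(1) relpowp_Suc_D2 by metis
  then obtain c where c: "c \<in> HV z" using edge_in_V graphD(2)[OF fibre_graph] by blast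
  have "LE (u, a) (z, c)" using z(1) Suc.prems(3) c edge_in_V unfolding lex_E_def lex_V_def by auto
  moreover have "(LE ^^ Suc k) (z, c) (v, b)" using Suc.IH[OF z(2) _ c Suc.prems(4)] z(1) edge_in_V
    by blast
  ultimately show ?case by (rule relpowp_Suc_I2)
qed

lemma lex_relpowp_project: "(LE ^^ k) p q \<Longrightarrow> \<exists>j\<le>k. (E ^^ j) (fst p) (fst q)"
proof (induction k arbitrary: q)
  case (Suc k)
  obtain r where r: "(LE ^^ k) p r" "LE r q" using Suc.prems by (auto elim: relpowp_Suc_E)
  obtain j where j: "j \<le> k" "(E ^^ j) (fst p) (fst r)" using Suc.IH[OF r(1)] by auto
  show ?case
  proof (cases "E (fst r) (fst q)")
    case True
    then have "(E ^^ Suc j) (fst p) (fst q)" by (rule relpowp_Suc_I[OF j(2)])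
    then show ?thesis using j(1) by (intro exI[of _ "Suc j"]) simp
  next
    case False
    then have "fst r = fst q" using r(2) unfolding lex_E_def by auto
    then show ?thesis using j by (intro exI[of _ j]) simp
  qed
qed auto

lemma lex_dist_other_fibre:
  assumes "u \<in> V" "v \<in> V" "a \<in> HV u" "b \<in> HV v" "u \<noteq> v"
  shows "dist LE (u, a) (v, b) = dist E u v"
proof -
  obtain k where k: "dist E u v = enat k" using dist_finite[OF assms(1,2)] by auto
  then have "(E ^^ k) u v" by (rule relpowp_dist)
  moreover obtain m where "k = Suc m" using calculation assms(5) by (cases k) auto
  ultimately have "(LE ^^ k) (u, a) (v, b)" using lex_relpowp_lift assms(1,3,4) by blast
  then have le: "dist LE (u, a) (v, b) \<le> enat k" by (rule dist_le_enat)
  then obtain n where n: "dist LE (u, a) (v, b) = enat n" by (cases "dist LE (u, a) (v, b)") auto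
  then obtain j where "j \<le> n" "(E ^^ j) u v" using lex_relpowp_project[OF relpowp_dist[OF n]]
    by auto
  then have "dist E u v \<le> enat n" using dist_le_enat[of j E u v] by (simp add: order_trans)
  then show ?thesis using le k n by auto
qed

lemma lex_dist_same_fibre:
  assumes "u \<in> V" "a \<in> HV u" "b \<in> HV u"
  shows "dist LE (u, a) (u, b) = dist2 (HE u) a b"
proof -
  have d2: "dist2 (HE u) a b = (if a = b then 0 else if HE u a b then 1 else 2)"
    using dist2_eq[OF graphD(5)[OF fibre_graph[OF assms(1)]]] by simp
  consider "a = b" | "HE u a b" | "a \<noteq> b" "\<not> HE u a b" by blast
  then show ?thesis
  proof cases
    case 2
    then have "LE (u, a) (u, b)" using assms unfolding lex_E_def lex_V_def by auto
    then show ?thesis using d2 2 dist_eq_1_iff[OF irreflp_lex_E] by auto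
  next
    case 3
    \<comment> \<open>a path of length 2 through the fibre of a neighbour of u\<close>
    obtain w where w: "E u w" using exists_neighbour assms(1) by blast
    then obtain c where c: "c \<in> HV w" using edge_in_V graphD(2)[OF fibre_graph] by blast
    have "LE (u, a) (w, c)" "LE (w, c) (u, b)"
      using assms w c edge_in_V symp_E unfolding lex_E_def lex_V_def by (auto dest: sympD)
    then have "(LE ^^ Suc 1) (u, a) (u, b)"
      by (intro relpowp_Suc_I2[of LE _ "(w, c)"]) (simp_all only: relpowp_1)
    then have "(LE ^^ 2) (u, a) (u, b)" by (simp only: numeral_2_eq_2 One_nat_def)
    moreover have "\<not> LE (u, a) (u, b)" using 3 irreflp_E unfolding lex_E_def irreflp_def by auto
    ultimately show ?thesis using dist_eq_2[OF irreflp_lex_E] d2 3 by auto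
  qed (use d2 in simp)
qed

lemma lex_E_iff:
  "LE (u, a) (v, b) \<longleftrightarrow> E u v \<and> a \<in> HV u \<and> b \<in> HV v \<or> u = v \<and> u \<in> V \<and> HE u a b"
  using edge_in_V graphD(3)[OF fibre_graph] unfolding lex_E_def lex_V_def by auto

lemma fibre_subset: "S \<subseteq> LV \<Longrightarrow> fibre S u \<subseteq> HV u"
  unfolding fibre_def lex_V_def by auto

lemma lex_distinguishes_fibre_edge:
  assumes "S \<subseteq> LV" "u \<in> V" "a \<in> HV u" "b \<in> HV u"
  shows "(\<exists>s\<in>S. dist LE s (u, a) \<noteq> dist LE s (u, b)) \<longleftrightarrow>
    (\<exists>c\<in>fibre S u. dist2 (HE u) c a \<noteq> dist2 (HE u) c b)"
proof -
  have "dist LE (w, c) (u, a) \<noteq> dist LE (w, c) (u, b) \<longleftrightarrow>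
      w = u \<and> dist2 (HE u) c a \<noteq> dist2 (HE u) c b" if "(w, c) \<in> S" for w c
    using that assms lex_dist_same_fibre lex_dist_other_fibre lex_V_iff by (cases "w = u") auto
  then show ?thesis unfolding fibre_def by auto
qed

lemma lex_distinguishes_cross_edge:
  assumes "S \<subseteq> LV" "E u v" "a \<in> HV u" "b \<in> HV v"
  shows "(\<exists>s\<in>S. dist LE s (u, a) \<noteq> dist LE s (v, b)) \<longleftrightarrow>
    \<not> fibre S u \<subseteq> open_nbhd (HE u) a \<or> \<not> fibre S v \<subseteq> open_nbhd (HE v) b \<or>
    (\<exists>w\<in>V - {u, v}. fibre S w \<noteq> {} \<and> dist E w u \<noteq> dist E w v)"
proof -
  have uv: "u \<in> V" "v \<in> V" "u \<noteq> v" using assms(2) edge_in_V irreflp_E by (auto simp: irreflp_def)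
  have d1: "dist E u v = 1" "dist E v u = 1"
    using assms(2) symp_E dist_eq_1_iff[OF irreflp_E] by (auto dest: sympD)
  let ?P = "\<lambda>s. dist LE s (u, a) \<noteq> dist LE s (v, b)"
  have "(\<exists>s\<in>S. ?P s) \<longleftrightarrow> (\<exists>c\<in>fibre S u. ?P (u, c)) \<or> (\<exists>c\<in>fibre S v. ?P (v, c)) \<or>
      (\<exists>w\<in>V - {u, v}. \<exists>c\<in>fibre S w. ?P (w, c))"
    using assms(1) unfolding fibre_def lex_V_def by auto
  moreover have "(\<exists>c\<in>fibre S u. ?P (u, c)) \<longleftrightarrow> \<not> fibre S u \<subseteq> open_nbhd (HE u) a"
  proof -
    have "?P (u, c) \<longleftrightarrow> \<not> HE u a c" if "c \<in> HV u" for c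
      using lex_dist_same_fibre[OF uv(1) that assms(3)]
        lex_dist_other_fibre[OF uv(1,2) that assms(4) uv(3)]
        d1 dist2_eq_1_iff[OF graphD(5)[OF fibre_graph[OF uv(1)]]] fibre_edge_sym[OF uv(1)] by auto
    then show ?thesis using fibre_subset[OF assms(1), of u] unfolding open_nbhd_def by blast
  qed
  moreover have "(\<exists>c\<in>fibre S v. ?P (v, c)) \<longleftrightarrow> \<not> fibre S v \<subseteq> open_nbhd (HE v) b"
  proof -
    have "?P (v, c) \<longleftrightarrow> \<not> HE v b c" if "c \<in> HV v" for c
      using lex_dist_same_fibre[OF uv(2) that assms(4)]
        lex_dist_other_fibre[OF uv(2,1) that assms(3)] uv(3)
        d1 dist2_eq_1_iff[OF graphD(5)[OF fibre_graph[OF uv(2)]]] fibre_edge_sym[OF uv(2)] by auto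
    then show ?thesis using fibre_subset[OF assms(1), of v] unfolding open_nbhd_def by blast
  qed
  moreover have "(\<exists>w\<in>V - {u, v}. \<exists>c\<in>fibre S w. ?P (w, c)) \<longleftrightarrow>
      (\<exists>w\<in>V - {u, v}. fibre S w \<noteq> {} \<and> dist E w u \<noteq> dist E w v)"
  proof -
    have "?P (w, c) \<longleftrightarrow> dist E w u \<noteq> dist E w v" if "w \<in> V - {u, v}" "c \<in> HV w" for w c
      using that assms(3,4) uv lex_dist_other_fibre by auto
    then show ?thesis using fibre_subset[OF assms(1)] by blast
  qed
  ultimately show ?thesis by simp
qed

lemma local_metric_generator_lex_iff:
  assumes "S \<subseteq> LV"
  shows "local_metric_generator LV LE S \<longleftrightarrow>
    (\<forall>u\<in>V. local_adj_generator (HV u) (HE u) (fibre S u)) \<and>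
    (\<forall>u v. E u v \<longrightarrow>
      \<not> in_some_nbhd (HV u) (HE u) (fibre S u) \<or> \<not> in_some_nbhd (HV v) (HE v) (fibre S v) \<or>
      (\<exists>w\<in>V - {u, v}. fibre S w \<noteq> {} \<and> dist E w u \<noteq> dist E w v))"
    (is "_ \<longleftrightarrow> ?rhs")
proof -
  let ?resolved = "\<lambda>x y. \<exists>s\<in>S. dist LE s x \<noteq> dist LE s y"
  have "local_metric_generator LV LE S \<longleftrightarrow> (\<forall>u a v b. LE (u, a) (v, b) \<longrightarrow> ?resolved (u, a) (v, b))"
    using assms unfolding local_metric_generator_def by simp
  also have "\<dots> \<longleftrightarrow> (\<forall>u\<in>V. \<forall>a b. HE u a b \<longrightarrow> ?resolved (u, a) (u, b)) \<and>
      (\<forall>u v. E u v \<longrightarrow> (\<forall>a\<in>HV u. \<forall>b\<in>HV v. ?resolved (u, a) (v, b)))"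
    unfolding lex_E_iff by blast
  also have "\<dots> \<longleftrightarrow> ?rhs"
  proof -
    have "(\<forall>a b. HE u a b \<longrightarrow> ?resolved (u, a) (u, b)) \<longleftrightarrow>
        local_adj_generator (HV u) (HE u) (fibre S u)" if "u \<in> V" for u
      using lex_distinguishes_fibre_edge[OF assms that] graphD(3)[OF fibre_graph[OF that]]
        fibre_subset[OF assms] unfolding local_adj_generator_def by blast
    moreover have "(\<forall>a\<in>HV u. \<forall>b\<in>HV v. ?resolved (u, a) (v, b)) \<longleftrightarrow>
        \<not> in_some_nbhd (HV u) (HE u) (fibre S u) \<or> \<not> in_some_nbhd (HV v) (HE v) (fibre S v)
        \<or> (\<exists>w\<in>V - {u, v}. fibre S w \<noteq> {} \<and> dist E w u \<noteq> dist E w v)" if "E u v" for u v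
      using lex_distinguishes_cross_edge[OF assms that] unfolding in_some_nbhd_def by blast
    ultimately show ?thesis by simp
  qed
  finally show ?thesis .
qed

lemma card_eq_sum_card_fibre:
  assumes "S \<subseteq> LV"
  shows "card S = (\<Sum>u\<in>V. card (fibre S u))"
proof -
  have "S = (SIGMA u:V. fibre S u)" using assms unfolding fibre_def lex_V_def by auto
  moreover have "finite (fibre S u)" if "u \<in> V" for u
    using fibre_subset[OF assms] graphD(1)[OF fibre_graph[OF that]] by (rule finite_subset)
  ultimately show ?thesis using finite_V card_SigmaI[of V "fibre S"] by simp
qed

section \<open>Admissible sets\<close>

abbreviation "I \<equiv> I_set V HV HE"
abbreviation "adim u \<equiv> local_adj_dim (HV u) (HE u)"
abbreviation "edgeless u \<equiv> empty_graph (HV u) (HE u)"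

lemma mem_I_iff: "u \<in> I \<longleftrightarrow> u \<in> V \<and> class_G (HV u) (HE u)"
  unfolding I_set_def by simp

lemma edgeless_in_I: "u \<in> V \<Longrightarrow> edgeless u \<Longrightarrow> u \<in> I"
  using empty_graph_class_G fibre_graph mem_I_iff by blast

text \<open>J stands for the vertices u \<in> I whose fibre of a local metric generator lies in no open
  neighbourhood of H_u, each costing one extra vertex; the fibre at w is then nonempty exactly
  when \<not> edgeless w \<or> w \<in> J.\<close>

definition admissible :: "'a set \<Rightarrow> bool" where
  "admissible J \<longleftrightarrow> J \<subseteq> I \<and> (\<forall>u v. E u v \<longrightarrow> u \<in> I \<longrightarrow> v \<in> I \<longrightarrow> u \<in> J \<or> v \<in> J \<or>
     (\<exists>w\<in>V - {u, v}. (\<not> edgeless w \<or> w \<in> J) \<and> dist E w u \<noteq> dist E w v))"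

lemma admissibleD:
  assumes "admissible J" "E u v" "u \<in> I - J" "v \<in> I - J"
  shows "\<exists>w\<in>V - {u, v}. (\<not> edgeless w \<or> w \<in> J) \<and> dist E w u \<noteq> dist E w v"
  using assms(1)[unfolded admissible_def, THEN conjunct2, rule_format, OF assms(2)] assms(3,4)
  by simp

lemma admissible_subset_I: "admissible J \<Longrightarrow> J \<subseteq> I"
  unfolding admissible_def by simp

lemma admissible_subset_V: "admissible J \<Longrightarrow> J \<subseteq> V"
  using admissible_subset_I mem_I_iff by blast

lemma admissible_I: "admissible I"
  unfolding admissible_def by simp

lemma admissible_of_local_metric_generator:
  assumes "local_metric_generator LV LE S"
  shows "admissible {u \<in> I. \<not> in_some_nbhd (HV u) (HE u) (fibre S u)}"
proof -
  have S: "S \<subseteq> LV" using assms unfolding local_metric_generator_def by simp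
  have "\<not> edgeless w \<or> w \<in> {u \<in> I. \<not> in_some_nbhd (HV u) (HE u) (fibre S u)}"
    if "w \<in> V" "fibre S w \<noteq> {}" for w
    using that edgeless_in_I empty_graph_not_in_some_nbhd by blast
  then show ?thesis
    using assms[unfolded local_metric_generator_lex_iff[OF S]] unfolding admissible_def by blast
qed

lemma card_local_metric_generator_ge:
  assumes "local_metric_generator LV LE S"
  shows "(\<Sum>u\<in>V. adim u) + card {u \<in> I. \<not> in_some_nbhd (HV u) (HE u) (fibre S u)} \<le> card S"
proof -
  let ?J = "{u \<in> I. \<not> in_some_nbhd (HV u) (HE u) (fibre S u)}"
  have S: "S \<subseteq> LV" using assms unfolding local_metric_generator_def by simp
  have "adim u + of_bool (u \<in> ?J) \<le> card (fibre S u)" if u: "u \<in> V" for u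
  proof -
    have gen: "local_adj_generator (HV u) (HE u) (fibre S u)"
      using assms u unfolding local_metric_generator_lex_iff[OF S] by blast
    show ?thesis
      using class_G_card_not_in_some_nbhd[OF fibre_graph[OF u] _ gen]
          local_adj_dim_le[OF fibre_graph[OF u] gen]
      by (auto simp: mem_I_iff)
  qed
  then have "(\<Sum>u\<in>V. adim u + of_bool (u \<in> ?J)) \<le> (\<Sum>u\<in>V. card (fibre S u))"
    by (rule sum_mono)
  moreover have "?J \<subseteq> V" using mem_I_iff by blast
  ultimately show ?thesis
    using card_eq_sum_card_fibre[OF S] sum_add_of_bool_card[OF finite_V, of ?J adim] by argo
qed

lemma fibre_generator_exists:
  assumes "J \<subseteq> I" "u \<in> V"
  obtains C where "local_adj_generator (HV u) (HE u) C" "card C = adim u + of_bool (u \<in> J)"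
    "u \<notin> I \<or> u \<in> J \<Longrightarrow> \<not> in_some_nbhd (HV u) (HE u) C"
proof -
  consider "u \<notin> I" | "u \<in> J" | "u \<in> I - J" by blast
  then show ?thesis
  proof cases
    case 1
    then have "\<not> class_G (HV u) (HE u)" using assms(2) mem_I_iff by blast
    then obtain B where "local_adj_basis (HV u) (HE u) B" "\<not> in_some_nbhd (HV u) (HE u) B"
      unfolding class_G_def in_some_nbhd_def by blast
    moreover have "u \<notin> J" using 1 assms(1) by blast
    ultimately show ?thesis using that[of B] unfolding local_adj_basis_def by simp
  next
    case 2
    then have "class_G (HV u) (HE u)" using assms mem_I_iff by blast
    then show ?thesis
      using class_G_generator_not_in_some_nbhd[OF fibre_graph[OF assms(2)]] that 2 by auto
  next
    case 3
    then show ?thesis using local_adj_basis_exists[OF fibre_graph[OF assms(2)]] that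
      unfolding local_adj_basis_def by auto
  qed
qed

lemma local_metric_generator_of_admissible:
  assumes "admissible J"
  obtains S where "local_metric_generator LV LE S" "card S = (\<Sum>u\<in>V. adim u) + card J"
proof -
  have J: "J \<subseteq> I" using assms by (rule admissible_subset_I)
  have "\<forall>u\<in>V. \<exists>C. local_adj_generator (HV u) (HE u) C \<and> card C = adim u + of_bool (u \<in> J) \<and>
      (u \<notin> I \<or> u \<in> J \<longrightarrow> \<not> in_some_nbhd (HV u) (HE u) C)"
    by (metis fibre_generator_exists[OF J])
  then obtain C where C: "\<And>u. u \<in> V \<Longrightarrow> local_adj_generator (HV u) (HE u) (C u)"
    "\<And>u. u \<in> V \<Longrightarrow> card (C u) = adim u + of_bool (u \<in> J)"
    "\<And>u. u \<in> V \<Longrightarrow> u \<notin> I \<or> u \<in> J \<Longrightarrow> \<not> in_some_nbhd (HV u) (HE u) (C u)"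
    by (metis bchoice)
  define S where "S = (SIGMA u:V. C u)"
  have S: "S \<subseteq> LV" using C(1) unfolding S_def lex_V_def local_adj_generator_def by auto
  have fibre_S: "fibre S u = C u" if "u \<in> V" for u using that unfolding S_def fibre_def by auto
  have nonempty: "C w \<noteq> {}" if "w \<in> V" "\<not> edgeless w \<or> w \<in> J" for w
    using that C local_adj_generator_nonempty not_in_some_nbhd_nonempty graphD(2)[OF fibre_graph]
    unfolding empty_graph_def by metis
  have "local_metric_generator LV LE S"
    unfolding local_metric_generator_lex_iff[OF S]
  proof (intro conjI ballI allI impI)
    fix u assume "u \<in> V"
    then show "local_adj_generator (HV u) (HE u) (fibre S u)" using C(1) fibre_S by simp
  next
    fix u v assume e: "E u v"
    then have uv: "u \<in> V" "v \<in> V" using edge_in_V by auto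
    show "\<not> in_some_nbhd (HV u) (HE u) (fibre S u) \<or> \<not> in_some_nbhd (HV v) (HE v) (fibre S v) \<or>
        (\<exists>w\<in>V - {u, v}. fibre S w \<noteq> {} \<and> dist E w u \<noteq> dist E w v)"
    proof (cases "u \<in> I - J \<and> v \<in> I - J")
      case True
      then obtain w where w: "w \<in> V - {u, v}" "\<not> edgeless w \<or> w \<in> J" "dist E w u \<noteq> dist E w v"
        using admissibleD[OF assms e] by blast
      then have "fibre S w \<noteq> {}" using nonempty fibre_S by simp
      then show ?thesis using w by blast
    qed (use C(3) fibre_S uv in auto)
  qed
  moreover have "card S = (\<Sum>u\<in>V. adim u) + card J"
    using card_eq_sum_card_fibre[OF S] fibre_S C(2) sum_add_of_bool_card[OF finite_V, of J adim]
      J mem_I_iff by (simp add: subset_iff)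
  ultimately show ?thesis using that by blast
qed

lemma local_metric_dim_lex:
  "local_metric_dim LV LE = (\<Sum>u\<in>V. adim u) + Min {card J | J. admissible J}"
proof (rule antisym)
  have generator_subset: "S \<subseteq> LV" if "local_metric_generator LV LE S" for S
    using that unfolding local_metric_generator_def by simp
  obtain J where J: "admissible J" "card J = Min {card J | J. admissible J}"
    using Min_card_attained[where P = admissible, OF finite_V admissible_subset_V admissible_I]
    by blast
  obtain S where S: "local_metric_generator LV LE S" "card S = (\<Sum>u\<in>V. adim u) + card J"
    using local_metric_generator_of_admissible[OF J(1)] by blast
  have "local_metric_dim LV LE \<le> card S"
    unfolding local_metric_dim_def
    by (rule Min_card_le[where P = "local_metric_generator LV LE",
          OF finite_lex_V generator_subset S(1)])
  then show "local_metric_dim LV LE \<le> (\<Sum>u\<in>V. adim u) + Min {card J | J. admissible J}"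
    using S(2) J(2) by simp
  obtain S' where S': "local_metric_generator LV LE S'" "card S' = local_metric_dim LV LE"
    using Min_card_attained[where P = "local_metric_generator LV LE",
        OF finite_lex_V generator_subset S(1)]
    unfolding local_metric_dim_def by blast
  have "Min {card J | J. admissible J} \<le> card {u \<in> I. \<not> in_some_nbhd (HV u) (HE u) (fibre S' u)}"
    by (rule Min_card_le[where P = admissible, OF finite_V admissible_subset_V
          admissible_of_local_metric_generator[OF S'(1)]])
  then show "(\<Sum>u\<in>V. adim u) + Min {card J | J. admissible J} \<le> local_metric_dim LV LE"
    using card_local_metric_generator_ge[OF S'(1)] S'(2) by linarith
qed

end

section \<open>Twin classes and the parameter \<rho>\<close>

locale lex_product_rep = lex_product +
  fixes rep :: "'a set \<Rightarrow> 'a"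
  assumes rep_mem: "\<And>U. U \<in> twin_classes_nonsingleton V E \<Longrightarrow> I_set V HV HE \<inter> U \<noteq> {}
    \<Longrightarrow> rep U \<in> I_set V HV HE \<inter> U"
begin

abbreviation "N \<equiv> closed_nbhd E"
abbreviation "CL \<equiv> twin_classes_nonsingleton V E"
abbreviation "CI \<equiv> {U \<in> CL. I \<inter> U \<noteq> {}}"
abbreviation "T \<equiv> T_set V E"
abbreviation "XE \<equiv> X_E_set V E HV HE rep"
abbreviation "VE \<equiv> V_E_set V E HV HE"
abbreviation "R \<equiv> rel_R V E HV HE rep"

lemma X_E_subset_I: "XE \<subseteq> I"
  unfolding X_E_set_def by blast

lemma I_diff_X_E: "I - XE = (\<Union>U\<in>CL. I \<inter> U - {rep U})"
  unfolding X_E_set_def by blast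

lemma X_E_eq_rep: "x \<in> XE \<Longrightarrow> U \<in> CL \<Longrightarrow> x \<in> U \<Longrightarrow> x = rep U"
  unfolding X_E_set_def by blast

lemma rep_mem_X_E:
  assumes "U \<in> CI"
  shows "rep U \<in> XE"
proof -
  have r: "rep U \<in> I \<inter> U" using rep_mem assms by blast
  have "rep U \<notin> I \<inter> U' - {rep U'}" if "U' \<in> CL" for U'
    using twin_classes_disjoint[OF that, of U "rep U"] r assms by blast
  then show ?thesis using r unfolding X_E_set_def by blast
qed

lemma mem_X_E_if_not_T: "x \<in> I \<Longrightarrow> x \<notin> T \<Longrightarrow> x \<in> XE"
  unfolding X_E_set_def T_set_def by blast

lemma mem_V_E_iff: "w \<in> VE \<longleftrightarrow> w \<in> V \<and> w \<notin> T \<and> edgeless w"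
  unfolding V_E_set_def by simp

definition R_resolving :: "'a set \<Rightarrow> bool" where
  "R_resolving A \<longleftrightarrow> A \<subseteq> XE \<and> (\<forall>x y. R x y \<longrightarrow> (\<exists>a\<in>A. dist E a x \<noteq> dist E a y))"

lemma finite_X_E: "finite XE"
proof -
  have "XE \<subseteq> V" using X_E_subset_I mem_I_iff by blast
  then show ?thesis using finite_V by (rule finite_subset)
qed

lemma R_resolving_subset: "R_resolving A \<Longrightarrow> A \<subseteq> XE"
  unfolding R_resolving_def by simp

lemma R_resolvingD: "R_resolving A \<Longrightarrow> R x y \<Longrightarrow> \<exists>a\<in>A. dist E a x \<noteq> dist E a y"
  unfolding R_resolving_def by blast

lemma varrho_eq: "varrho V E HV HE rep = Min {card A | A. R_resolving A}"
  unfolding varrho_def R_resolving_def ..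

lemma varrho_le: "R_resolving A \<Longrightarrow> varrho V E HV HE rep \<le> card A"
  unfolding varrho_eq by (rule Min_card_le[OF finite_X_E R_resolving_subset])

lemma varrho_attained:
  obtains A where "R_resolving A" "card A = varrho V E HV HE rep"
proof -
  have "R_resolving XE"
    unfolding R_resolving_def
  proof (intro conjI allI impI)
    fix x y assume "R x y"
    then have "x \<in> XE" "x \<noteq> y" using irreflp_E unfolding rel_R_def irreflp_def by auto
    then show "\<exists>a\<in>XE. dist E a x \<noteq> dist E a y" using dist_eq_0_iff[of E x y]
      by (intro bexI[of _ x]) simp_all
  qed simp
  then show ?thesis
    using that Min_card_attained[OF finite_X_E R_resolving_subset] unfolding varrho_eq by blast
qed

lemma admissible_card_twin_class:
  assumes "admissible J" "U \<in> CL"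
  shows "card (I \<inter> U) \<le> card (J \<inter> U) + 1"
proof -
  \<comment> \<open>two twins in I - J would be adjacent vertices of I separated by no third vertex\<close>
  have "z1 = z2" if z: "z1 \<in> I \<inter> U - J" "z2 \<in> I \<inter> U - J" for z1 z2
  proof (rule ccontr)
    assume "z1 \<noteq> z2"
    have twins: "N z1 = N z2" using twin_class_closed_nbhd_eq[OF assms(2)] z by simp
    then have "E z1 z2" using \<open>z1 \<noteq> z2\<close> by (rule true_twins_adjacent)
    then obtain w where "w \<in> V - {z1, z2}" "dist E w z1 \<noteq> dist E w z2"
      using admissibleD[OF assms(1)] z by blast
    then show False using dist_true_twins[OF symp_E twins] by simp
  qed
  moreover have "finite U" using assms(2) by (rule finite_twin_class)
  ultimately have "card (I \<inter> U - J) \<le> 1" by (simp add: card_le_Suc0_iff_eq)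
  moreover have "card (I \<inter> U) \<le> card (J \<inter> U \<union> (I \<inter> U - J))"
    using \<open>finite U\<close> by (intro card_mono) auto
  ultimately show ?thesis using card_Un_le[of "J \<inter> U" "I \<inter> U - J"] by linarith
qed

definition saturated_classes :: "'a set \<Rightarrow> 'a set set" where
  "saturated_classes J = {U \<in> CI. I \<inter> U \<subseteq> J}"

lemma X_E_twin_in_I_diff:
  assumes "J \<subseteq> I" "x \<in> XE" "x \<notin> (J - T) \<union> rep ` saturated_classes J"
  obtains x' where "x' \<in> I - J" "N x' = N x"
proof -
  have "x \<in> I" using assms(2) X_E_subset_I by blast
  show ?thesis
  proof (cases "x \<in> J")
    case True
    then have "x \<in> T" using assms(3) by simp
    then obtain U where U: "U \<in> CL" "x \<in> U" unfolding mem_T_set_iff by blast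
    then have "U \<in> CI" using \<open>x \<in> I\<close> by blast
    moreover have "x = rep U" using X_E_eq_rep[OF assms(2) U] .
    then have "U \<notin> saturated_classes J" using assms(3) by blast
    ultimately obtain x' where "x' \<in> I \<inter> U" "x' \<notin> J" unfolding saturated_classes_def by blast
    then show ?thesis using that[of x'] twin_class_closed_nbhd_eq[OF U(1) _ U(2)] by simp
  qed (use that \<open>x \<in> I\<close> in simp)
qed

text \<open>A pair of \<R> missed by this set has true twins x', y' in I - J; the admissible witness
  separating them is then an edgeless vertex outside T, hence in J - T.\<close>

lemma R_resolving_of_admissible:
  assumes adm: "admissible J"
  shows "R_resolving ((J - T) \<union> rep ` saturated_classes J)" (is "R_resolving ?A")
  unfolding R_resolving_def
proof (intro conjI allI impI)
  have "J \<subseteq> I" using adm by (rule admissible_subset_I)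
  show "?A \<subseteq> XE"
  proof
    fix a assume "a \<in> ?A"
    then consider "a \<in> J - T" | U where "U \<in> saturated_classes J" "a = rep U" by blast
    then show "a \<in> XE"
    proof cases
      case 1
      then show ?thesis using \<open>J \<subseteq> I\<close> mem_X_E_if_not_T by blast
    next
      case 2
      then show ?thesis using rep_mem_X_E unfolding saturated_classes_def by simp
    qed
  qed
  fix x y assume "R x y"
  then have x: "x \<in> XE" and y: "y \<in> XE" and "E x y"
    and equidistant: "\<forall>u\<in>V - (VE \<union> {x, y}). dist E u x = dist E u y"
    unfolding rel_R_def by blast+
  have "x \<noteq> y" "x \<in> V" "y \<in> V" using \<open>E x y\<close> irreflp_E edge_in_V by (auto simp: irreflp_def)
  show "\<exists>a\<in>?A. dist E a x \<noteq> dist E a y"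
  proof (cases "x \<in> ?A \<or> y \<in> ?A")
    case True
    have "dist E x x \<noteq> dist E x y" "dist E y x \<noteq> dist E y y"
      using \<open>x \<noteq> y\<close> dist_eq_0_iff[of E x y] dist_eq_0_iff[of E y x] by auto
    then show ?thesis using True by blast
  next
    case False
    obtain x' where x': "x' \<in> I - J" "N x' = N x"
      using X_E_twin_in_I_diff[OF \<open>J \<subseteq> I\<close> x] False by blast
    obtain y' where y': "y' \<in> I - J" "N y' = N y"
      using X_E_twin_in_I_diff[OF \<open>J \<subseteq> I\<close> y] False by blast
    have "x' \<noteq> y'"
    proof
      assume "x' = y'"
      then have "N x = N y" using x' y' by simp
      then obtain U where U: "U \<in> CL" "x \<in> U" "y \<in> U"
        using true_twins_in_twin_class[OF finite_V \<open>x \<in> V\<close> \<open>y \<in> V\<close> _ \<open>x \<noteq> y\<close>] by blast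
      then show False using X_E_eq_rep[OF x U(1,2)] X_E_eq_rep[OF y U(1,3)] \<open>x \<noteq> y\<close> by simp
    qed
    have "y \<in> N x'" using x'(2) \<open>E x y\<close> by (simp add: mem_closed_nbhd_iff)
    then have "x' \<in> N y'" using y'(2) mem_closed_nbhd_commute[OF symp_E] by simp
    then have "E y' x'" using \<open>x' \<noteq> y'\<close> by (simp add: mem_closed_nbhd_iff)
    then have "E x' y'" using symp_E by (rule sympD[rotated])
    then obtain w where w: "w \<in> V - {x', y'}" "\<not> edgeless w \<or> w \<in> J" "dist E w x' \<noteq> dist E w y'"
      using admissibleD[OF adm] x'(1) y'(1) by blast
    then have "w \<notin> {x, y}" "dist E w x \<noteq> dist E w y"
      using resolves_of_true_twins[OF symp_E irreflp_E x'(2) y'(2) \<open>E x y\<close>] by simp_all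
    then have "w \<in> VE" using equidistant w(1) by blast
    then have "w \<in> J - T" using w(2) mem_V_E_iff by blast
    then show ?thesis using \<open>dist E w x \<noteq> dist E w y\<close> by blast
  qed
qed

lemma card_admissible_Int_T_ge:
  assumes "admissible J"
  shows "(\<Sum>U\<in>CI. card (I \<inter> U) - 1) + card (saturated_classes J) \<le> card (J \<inter> T)"
proof -
  have "J \<subseteq> I" using assms by (rule admissible_subset_I)
  have finite_CI: "finite CI" using finite_twin_classes[OF finite_V] by simp
  have "card (I \<inter> U) - 1 + of_bool (U \<in> saturated_classes J) \<le> card (J \<inter> U)" if U: "U \<in> CI" for U
  proof (cases "U \<in> saturated_classes J")
    case True
    then have "J \<inter> U = I \<inter> U" using \<open>J \<subseteq> I\<close> unfolding saturated_classes_def by blast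
    moreover have "card (I \<inter> U) \<noteq> 0" using U finite_twin_class[of U V E] by simp
    ultimately show ?thesis using True by simp
  next
    case False
    have "card (I \<inter> U) \<le> card (J \<inter> U) + 1" using admissible_card_twin_class[OF assms] U by blast
    then show ?thesis using False by simp
  qed
  then have "(\<Sum>U\<in>CI. card (I \<inter> U) - 1 + of_bool (U \<in> saturated_classes J))
      \<le> (\<Sum>U\<in>CI. card (J \<inter> U))"
    by (rule sum_mono)
  moreover have "saturated_classes J \<subseteq> CI" unfolding saturated_classes_def by blast
  moreover have "card (J \<inter> T) = (\<Sum>U\<in>CI. card (J \<inter> U))"
  proof -
    have eq: "J \<inter> T = (\<Union>U\<in>CI. J \<inter> U)" using \<open>J \<subseteq> I\<close> by (auto simp: mem_T_set_iff) blast
    have "J \<inter> U \<inter> (J \<inter> U') = {}" if "U \<in> CI" "U' \<in> CI" "U \<noteq> U'" for U U'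
      using that twin_classes_disjoint[of U V E U'] by auto
    then have "card (\<Union>U\<in>CI. J \<inter> U) = (\<Sum>U\<in>CI. card (J \<inter> U))"
      using finite_CI finite_twin_class[of _ V E] by (intro card_UN_disjoint) auto
    then show ?thesis unfolding eq .
  qed
  ultimately show ?thesis
    using sum_add_of_bool_card[OF finite_CI, of "saturated_classes J" "\<lambda>U. card (I \<inter> U) - 1"]
    by simp
qed

lemma card_admissible_ge:
  assumes "admissible J"
  shows "(\<Sum>U\<in>CI. card (I \<inter> U) - 1) + varrho V E HV HE rep \<le> card J"
proof -
  have "finite J" using admissible_subset_V[OF assms] finite_V by (rule finite_subset)
  have "saturated_classes J \<subseteq> CL" unfolding saturated_classes_def by auto
  then have "finite (saturated_classes J)" using finite_twin_classes[OF finite_V]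
    by (rule finite_subset)
  have "varrho V E HV HE rep \<le> card ((J - T) \<union> rep ` saturated_classes J)"
    by (rule varrho_le[OF R_resolving_of_admissible[OF assms]])
  also have "\<dots> \<le> card (J - T) + card (rep ` saturated_classes J)" by (rule card_Un_le)
  also have "\<dots> \<le> card (J - T) + card (saturated_classes J)"
    using card_image_le[OF \<open>finite (saturated_classes J)\<close>] by simp
  finally have "varrho V E HV HE rep \<le> card (J - T) + card (saturated_classes J)" .
  moreover have "card J = card (J \<inter> T) + card (J - T)" using \<open>finite J\<close> by (rule card_Int_Diff)
  ultimately show ?thesis using card_admissible_Int_T_ge[OF assms] by linarith
qed

lemma card_I_diff_X_E: "card (I - XE) \<le> (\<Sum>U\<in>CI. card (I \<inter> U) - 1)"
proof -
  have "card (I - XE) \<le> (\<Sum>U\<in>CL. card (I \<inter> U - {rep U}))"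
    unfolding I_diff_X_E using finite_twin_classes[OF finite_V] by (rule card_UN_le)
  also have "\<dots> = (\<Sum>U\<in>CI. card (I \<inter> U - {rep U}))"
    using finite_twin_classes[OF finite_V] by (intro sum.mono_neutral_right) auto
  also have "\<dots> = (\<Sum>U\<in>CI. card (I \<inter> U) - 1)"
    using rep_mem by (intro sum.cong) (simp_all add: card_Diff_singleton_if)
  finally show ?thesis .
qed

lemma twin_in_I_diff_X_E_or_not_edgeless:
  assumes "w \<in> XE" "w \<in> T"
  obtains w' where "w' \<in> V" "w' \<noteq> w" "N w' = N w" "\<not> edgeless w' \<or> w' \<in> I - XE"
proof -
  obtain U where U: "U \<in> CL" "w \<in> U" using assms(2) unfolding mem_T_set_iff by blast
  then obtain w' where w': "w' \<in> U" "w' \<noteq> w" by (rule twin_class_other_member)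
  have "w' \<in> V" using twin_class_subset[OF U(1)] w'(1) by (rule subsetD)
  have "w' \<notin> XE"
  proof
    assume "w' \<in> XE"
    then have "w' = rep U" using U(1) w'(1) by (rule X_E_eq_rep)
    moreover have "w = rep U" using assms(1) U by (rule X_E_eq_rep)
    ultimately show False using w'(2) by simp
  qed
  have "N w' = N w" using twin_class_closed_nbhd_eq[OF U(1) w'(1) U(2)] .
  moreover have "\<not> edgeless w' \<or> w' \<in> I - XE" using \<open>w' \<notin> XE\<close> edgeless_in_I[OF \<open>w' \<in> V\<close>] by simp
  ultimately show ?thesis by (rule that[OF \<open>w' \<in> V\<close> w'(2)])
qed

lemma admissible_of_R_resolving:
  assumes "R_resolving A"
  shows "admissible ((I - XE) \<union> A)" (is "admissible ?J")
  unfolding admissible_def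
proof (intro conjI allI impI)
  have "A \<subseteq> XE" using assms unfolding R_resolving_def by simp
  then show "?J \<subseteq> I" using X_E_subset_I by auto
  fix u v assume "E u v" "u \<in> I" "v \<in> I"
  show "u \<in> ?J \<or> v \<in> ?J \<or> (\<exists>w\<in>V - {u, v}. (\<not> edgeless w \<or> w \<in> ?J) \<and> dist E w u \<noteq> dist E w v)"
  proof (cases "u \<in> ?J \<or> v \<in> ?J")
    case False
    then have u: "u \<in> XE" "u \<notin> A" and v: "v \<in> XE" "v \<notin> A" using \<open>u \<in> I\<close> \<open>v \<in> I\<close> by auto
    have "\<exists>w\<in>V - {u, v}. (\<not> edgeless w \<or> w \<in> ?J) \<and> dist E w u \<noteq> dist E w v"
    proof (cases "R u v")
      case True
      then obtain a where "a \<in> A" "dist E a u \<noteq> dist E a v"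
        using R_resolvingD[OF assms] by blast
      moreover have "a \<in> V" using \<open>a \<in> A\<close> \<open>A \<subseteq> XE\<close> X_E_subset_I mem_I_iff by auto
      ultimately show ?thesis using u(2) v(2) by auto
    next
      case False
      then obtain w where w: "w \<in> V - {u, v}" "w \<notin> VE" and dist: "dist E w u \<noteq> dist E w v"
        using u(1) v(1) \<open>E u v\<close> unfolding rel_R_def by auto
      show ?thesis
      proof (cases "edgeless w \<and> w \<in> XE")
        case True
        then have "w \<in> T" using w mem_V_E_iff by auto
        then obtain w' where w': "w' \<in> V" "N w' = N w" "\<not> edgeless w' \<or> w' \<in> I - XE"
          using twin_in_I_diff_X_E_or_not_edgeless[OF conjunct2[OF True]] by metis
        have "w' \<notin> {u, v}" "dist E w' u \<noteq> dist E w' v"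
          using true_twin_resolves[OF symp_E irreflp_E w'(2) \<open>E u v\<close>] w(1) dist by auto
        then show ?thesis using w' by auto
      next
        case False
        then have "\<not> edgeless w \<or> w \<in> ?J" using edgeless_in_I w(1) by auto
        then show ?thesis using w(1) dist by auto
      qed
    qed
    then show ?thesis by simp
  qed auto
qed

lemma Min_card_admissible:
  "Min {card J | J. admissible J} = (\<Sum>U\<in>CI. card (I \<inter> U) - 1) + varrho V E HV HE rep"
proof (rule antisym)
  obtain A where A: "R_resolving A" "card A = varrho V E HV HE rep" by (rule varrho_attained)
  have "Min {card J | J. admissible J} \<le> card ((I - XE) \<union> A)"
    by (rule Min_card_le[where P = admissible,
          OF finite_V admissible_subset_V admissible_of_R_resolving[OF A(1)]])
  also have "\<dots> \<le> card (I - XE) + card A" by (rule card_Un_le)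
  also have "\<dots> \<le> (\<Sum>U\<in>CI. card (I \<inter> U) - 1) + varrho V E HV HE rep"
    using card_I_diff_X_E A(2) by simp
  finally show "Min {card J | J. admissible J} \<le> (\<Sum>U\<in>CI. card (I \<inter> U) - 1) + varrho V E HV HE rep" .
next
  obtain J where J: "admissible J" "card J = Min {card J | J. admissible J}"
    using Min_card_attained[where P = admissible, OF finite_V admissible_subset_V admissible_I]
    by blast
  show "(\<Sum>U\<in>CI. card (I \<inter> U) - 1) + varrho V E HV HE rep \<le> Min {card J | J. admissible J}"
    using card_admissible_ge[OF J(1)] J(2) by simp
qed

end

theorem theorem2:
  fixes V :: "'a set" and E :: "'a \<Rightarrow> 'a \<Rightarrow> bool"
    and HV :: "'a \<Rightarrow> 'b set" and HE :: "'a \<Rightarrow> 'b \<Rightarrow> 'b \<Rightarrow> bool"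
    and rep :: "'a set \<Rightarrow> 'a"
  assumes "connected_graph V E"
    and "card V \<ge> 2"
    and "\<And>u. u \<in> V \<Longrightarrow> graph (HV u) (HE u)"
    and "\<And>U. U \<in> twin_classes_nonsingleton V E \<Longrightarrow> I_set V HV HE \<inter> U \<noteq> {}
           \<Longrightarrow> rep U \<in> I_set V HV HE \<inter> U"
  shows "local_metric_dim (lex_V V HV) (lex_E V E HV HE)
    = (\<Sum>u\<in>V. local_adj_dim (HV u) (HE u))
      + (\<Sum>U\<in>{U \<in> twin_classes_nonsingleton V E. I_set V HV HE \<inter> U \<noteq> {}}.
            card (I_set V HV HE \<inter> U) - 1)
      + varrho V E HV HE rep"
proof -
  interpret lex_product_rep V E HV HE rep
    using assms by unfold_locales auto
  show ?thesis using local_metric_dim_lex Min_card_admissible by (simp add: add.assoc)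
qed

end
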